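(* Under the setting where $N,B$ are positive integers with $B\mid N$, $\lambda>0$, and for an assignment vector $\bar N=(N_1,\dots,N_B)$ of positive integers with $\sum_i N_i=N$ one sets $T(\bar N)=\max(T_1,\dots,T_B)$ with independent $T_i\sim\mathrm{Exp}(N_i\lambda)$, the minimum of $\mathbb{E}[T(\bar N)]$ over all such assignments equals $$\frac{B}{N\lambda} H_B,$$ where $H_B = \sum_{k=1}^B \frac1k$ is the $B$-th harmonic number; it is attained by the balanced assignment $(N/B,\dots,N/B)$.
   Context: Interpretation: $B$ disjoint data batches replicated over $N$ workers with i.i.d. $\mathrm{Exp}(\lambda)$ service times; $T(\bar N)$ is the time at which every batch has been computed by at least one of its hosting workers. *)

theory Defs
  imports "HOL-Probability.Probability"
begin

definition assignments :: "nat \<Rightarrow> nat \<Rightarrow> (nat \<Rightarrow> nat) set" where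
  "assignments N B = {Nv. (\<forall>i<B. 0 < Nv i) \<and> (\<forall>i\<ge>B. Nv i = 0) \<and> (\<Sum>i<B. Nv i) = N}"

definition service_law :: "real \<Rightarrow> nat \<Rightarrow> (nat \<Rightarrow> nat) \<Rightarrow> (nat \<Rightarrow> real) measure" where
  "service_law lam B Nv = PiM {..<B} (\<lambda>i. density lborel (exponential_density (real (Nv i) * lam)))"

definition expected_T :: "real \<Rightarrow> nat \<Rightarrow> (nat \<Rightarrow> nat) \<Rightarrow> real" where
  "expected_T lam B Nv = (\<integral>t. Max ((\<lambda>i. t i) ` {..<B}) \<partial>service_law lam B Nv)"

end

theory Submission
  imports Defs
begin

(*
  Since E[max T_i] is the integral over t >= 0 of P(max T_i > t) = 1 - prod_i (1 - exp (-N_i lam t)),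
  it suffices to compare integrands. For fixed t the exponents x_i = N_i lam t sum to N lam t
  whatever the assignment, and under this constraint prod_i (1 - exp (-x_i)) is largest when all
  x_i are equal (AM-GM, then convexity of exp). For the balanced assignment the integral of
  1 - (1 - exp (-c t))^B with c = N lam / B is H_B / c, by expanding 1 - y^B = (1 - y) sum_{k<B} y^k.
*)

lemma prod_le_mean_pow:
  fixes y :: "'a \<Rightarrow> real"
  assumes "finite I" and "\<And>i. i \<in> I \<Longrightarrow> 0 \<le> y i"
  shows "(\<Prod>i\<in>I. y i) \<le> ((\<Sum>i\<in>I. y i) / card I) ^ card I"
proof (cases "\<exists>i\<in>I. y i = 0")
  case True
  then show ?thesis
    using assms by (simp add: prod_zero sum_nonneg)
next
  case False
  with assms have ypos: "\<And>i. i \<in> I \<Longrightarrow> 0 < y i" by force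
  show ?thesis
  proof (cases "I = {}")
    case False
    define n where "n = card I"
    have n: "0 < n" using assms(1) False by (simp add: n_def card_gt_0_iff)
    define m where "m = (\<Sum>i\<in>I. y i) / n"
    have w: "(\<Sum>i\<in>I. 1 / real n) = 1" using n by (simp add: n_def)
    have "(\<Sum>i\<in>I. 1 / real n * ln (y i)) \<le> ln (\<Sum>i\<in>I. (1 / real n) *\<^sub>R y i)"
      by (rule concave_on_sum[OF assms(1) False ln_concave w]) (use ypos n in auto)
    then have log_le: "(\<Sum>i\<in>I. ln (y i)) \<le> n * ln m"
      using n by (simp add: m_def sum_divide_distrib[symmetric] pos_divide_le_eq mult.commute)
    have "0 < m" unfolding m_def using ypos n False assms(1) by (intro divide_pos_pos sum_pos) auto
    have "(\<Prod>i\<in>I. y i) = exp (\<Sum>i\<in>I. ln (y i))"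
      using ypos by (simp add: exp_sum assms(1))
    also have "\<dots> \<le> exp (n * ln m)" using log_le by simp
    also have "\<dots> = m ^ n" using \<open>0 < m\<close> by (simp add: exp_of_nat_mult)
    finally show ?thesis by (simp add: m_def n_def)
  qed simp
qed

lemma prod_one_minus_exp_le_pow_mean:
  fixes x :: "'a \<Rightarrow> real"
  assumes "finite I" and "\<And>i. i \<in> I \<Longrightarrow> 0 \<le> x i"
  shows "(\<Prod>i\<in>I. 1 - exp (- x i)) \<le> (1 - exp (- ((\<Sum>i\<in>I. x i) / card I))) ^ card I"
proof (cases "I = {}")
  case False
  define n where "n = card I"
  have n: "0 < n" using assms(1) False by (simp add: n_def card_gt_0_iff)
  have w: "(\<Sum>i\<in>I. 1 / real n) = 1" using n by (simp add: n_def)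
  have "exp (\<Sum>i\<in>I. (1 / real n) *\<^sub>R - x i) \<le> (\<Sum>i\<in>I. 1 / real n * exp (- x i))"
    by (rule convex_on_sum[OF assms(1) False exp_convex w]) (use n in auto)
  moreover have "(\<Sum>i\<in>I. (1 / real n) *\<^sub>R - x i) = - ((\<Sum>i\<in>I. x i) / n)"
    by (simp add: sum_negf sum_divide_distrib)
  moreover have "(\<Sum>i\<in>I. 1 / real n * exp (- x i)) = (\<Sum>i\<in>I. exp (- x i)) / n"
    by (simp add: sum_divide_distrib)
  ultimately have jensen: "exp (- ((\<Sum>i\<in>I. x i) / n)) \<le> (\<Sum>i\<in>I. exp (- x i)) / n"
    by simp
  have mean: "(\<Sum>i\<in>I. 1 - exp (- x i)) / n = 1 - (\<Sum>i\<in>I. exp (- x i)) / n"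
    using n by (simp add: sum_subtractf n_def diff_divide_distrib)
  have "(\<Prod>i\<in>I. 1 - exp (- x i)) \<le> ((\<Sum>i\<in>I. 1 - exp (- x i)) / n) ^ n"
    unfolding n_def using assms by (intro prod_le_mean_pow) auto
  also have "\<dots> \<le> (1 - exp (- ((\<Sum>i\<in>I. x i) / n))) ^ n"
  proof (rule power_mono)
    have "0 \<le> 1 - exp (- x i)" if "i \<in> I" for i using assms(2)[OF that] by simp
    then show "0 \<le> (\<Sum>i\<in>I. 1 - exp (- x i)) / n" by (simp add: sum_nonneg)
  qed (use mean jensen in simp)
  finally show ?thesis by (simp add: n_def)
qed simp

lemma tendsto_exp_neg_mult_at_top:
  fixes r :: real
  assumes "0 < r"
  shows "((\<lambda>t. exp (- (r * t))) \<longlongrightarrow> 0) at_top"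
proof (rule filterlim_compose[OF exp_at_bot])
  show "LIM t at_top. - (r * t) :> at_bot"
    using filterlim_tendsto_neg_mult_at_bot[OF tendsto_const[of "- r"] _ filterlim_ident] assms by simp
qed

lemma nn_integral_exp_Ici:
  fixes r :: real
  assumes "0 < r"
  shows "(\<integral>\<^sup>+t\<in>{0..}. ennreal (exp (- (r * t))) \<partial>lborel) = ennreal (1 / r)"
proof -
  have "(\<integral>\<^sup>+t\<in>{0..}. ennreal (exp (- (r * t))) \<partial>lborel) = ennreal (0 - (\<lambda>t. - exp (- (r * t)) / r) 0)"
  proof (rule nn_integral_FTC_atLeast)
    show "(\<lambda>t. exp (- (r * t))) \<in> borel_measurable borel" by measurable
  next
    fix t :: real
    show "((\<lambda>t. - exp (- (r * t)) / r) has_real_derivative exp (- (r * t))) (at t)"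
      using assms by (auto intro!: derivative_eq_intros)
  next
    show "((\<lambda>t. - exp (- (r * t)) / r) \<longlongrightarrow> 0) at_top"
      using tendsto_divide[OF tendsto_minus[OF tendsto_exp_neg_mult_at_top[OF assms]] tendsto_const, of r] assms
      by simp
  qed simp_all
  then show ?thesis by simp
qed

lemma nn_integral_one_minus_pow_one_minus_exp:
  fixes r :: real and n :: nat
  assumes "0 < r"
  shows "(\<integral>\<^sup>+t\<in>{0..}. ennreal (1 - (1 - exp (- (r * t))) ^ n) \<partial>lborel) = ennreal (harm n / r)"
proof -
  define F where "F t = (\<Sum>k<n. (1 - exp (- (r * t))) ^ Suc k / (r * real (Suc k)))" for t
  have "(\<integral>\<^sup>+t\<in>{0..}. ennreal (1 - (1 - exp (- (r * t))) ^ n) \<partial>lborel) = ennreal (harm n / r - F 0)"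
  proof (rule nn_integral_FTC_atLeast)
    show "(\<lambda>t. 1 - (1 - exp (- (r * t))) ^ n) \<in> borel_measurable borel" by measurable
  next
    fix t :: real assume "0 \<le> t"
    then show "0 \<le> 1 - (1 - exp (- (r * t))) ^ n"
      using assms by (simp add: power_le_one)
  next
    fix t :: real
    have "((\<lambda>t. (1 - exp (- (r * t))) ^ Suc k / (r * real (Suc k))) has_real_derivative
            exp (- (r * t)) * (1 - exp (- (r * t))) ^ k) (at t)" for k
    proof -
      have "((\<lambda>t. 1 - exp (- (r * t))) has_real_derivative r * exp (- (r * t))) (at t)"
        by (auto intro!: derivative_eq_intros)
      from DERIV_cdivide[OF DERIV_power_Suc[OF this, of k], of "r * real (Suc k)"] show ?thesis
      proof (rule DERIV_cong)
        have "r * real (Suc k) \<noteq> 0" using assms by simp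
        then show "(1 + real k) * (r * exp (- (r * t)) * (1 - exp (- (r * t))) ^ k) / (r * real (Suc k)) =
            exp (- (r * t)) * (1 - exp (- (r * t))) ^ k"
          by (simp add: field_simps)
      qed
    qed
    then have "(F has_real_derivative (\<Sum>k<n. exp (- (r * t)) * (1 - exp (- (r * t))) ^ k)) (at t)"
      unfolding F_def by (intro DERIV_sum)
    moreover have "(\<Sum>k<n. exp (- (r * t)) * (1 - exp (- (r * t))) ^ k) = 1 - (1 - exp (- (r * t))) ^ n"
      using one_diff_power_eq[of "1 - exp (- (r * t))" n] by (simp add: sum_distrib_left)
    ultimately show "(F has_real_derivative 1 - (1 - exp (- (r * t))) ^ n) (at t)" by simp
  next
    have "((\<lambda>t. (1 - exp (- (r * t))) ^ Suc k / (r * real (Suc k))) \<longlongrightarrow> 1 / (r * real (Suc k))) at_top" for k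
    proof -
      have "((\<lambda>t. (1 - exp (- (r * t))) ^ Suc k / (r * real (Suc k))) \<longlongrightarrow> (1 - 0) ^ Suc k / (r * real (Suc k))) at_top"
        using assms by (intro tendsto_intros tendsto_exp_neg_mult_at_top) auto
      then show ?thesis by simp
    qed
    then have "(F \<longlongrightarrow> (\<Sum>k<n. 1 / (r * real (Suc k)))) at_top"
      unfolding F_def by (intro tendsto_sum)
    moreover have "(\<Sum>k<n. 1 / (r * real (Suc k))) = harm n / r"
      by (simp add: harm_altdef sum_divide_distrib field_simps)
    ultimately show "(F \<longlongrightarrow> harm n / r) at_top" by simp
  qed
  then show ?thesis by (simp add: F_def)
qed

lemma (in sigma_finite_measure) nn_integral_layer_cake:
  fixes f :: "'a \<Rightarrow> real"
  assumes [measurable]: "f \<in> borel_measurable M"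
  shows "(\<integral>\<^sup>+x. ennreal (f x) \<partial>M) = (\<integral>\<^sup>+t\<in>{0..}. emeasure M {x\<in>space M. t < f x} \<partial>lborel)"
proof -
  interpret pair_sigma_finite M lborel
    by (intro pair_sigma_finite.intro sigma_finite_measure_axioms lborel.sigma_finite_measure_axioms)
  have "(\<integral>\<^sup>+x. ennreal (f x) \<partial>M) = (\<integral>\<^sup>+x. (\<integral>\<^sup>+t. indicator {0..<f x} t \<partial>lborel) \<partial>M)"
  proof (rule nn_integral_cong)
    fix x show "ennreal (f x) = (\<integral>\<^sup>+t. indicator {0..<f x} t \<partial>lborel)"
      by (cases "0 \<le> f x") (auto simp: ennreal_neg)
  qed
  also have "\<dots> = (\<integral>\<^sup>+t. (\<integral>\<^sup>+x. indicator {0..<f x} t \<partial>M) \<partial>lborel)"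
  proof (rule Fubini'[symmetric])
    have "(\<lambda>(x, t). indicator {0..<f x} t :: ennreal) = (\<lambda>p. if 0 \<le> snd p \<and> snd p < f (fst p) then 1 else 0)"
      by (auto simp: indicator_def fun_eq_iff)
    also have "\<dots> \<in> borel_measurable (M \<Otimes>\<^sub>M lborel)"
      by measurable
    finally show "(\<lambda>(x, t). indicator {0..<f x} t :: ennreal) \<in> borel_measurable (M \<Otimes>\<^sub>M lborel)" .
  qed
  also have "\<dots> = (\<integral>\<^sup>+t\<in>{0..}. emeasure M {x\<in>space M. t < f x} \<partial>lborel)"
  proof (rule nn_integral_cong)
    fix t :: real
    have "(\<integral>\<^sup>+x. indicator {0..<f x} t \<partial>M) = (\<integral>\<^sup>+x. indicator {x\<in>space M. t < f x} x * indicator {0..} t \<partial>M)"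
      by (intro nn_integral_cong) (auto simp: indicator_def)
    also have "\<dots> = emeasure M {x\<in>space M. t < f x} * indicator {0..} t"
      by (simp add: nn_integral_multc)
    finally show "(\<integral>\<^sup>+x. indicator {0..<f x} t \<partial>M) = emeasure M {x\<in>space M. t < f x} * indicator {0..} t" .
  qed
  finally show ?thesis .
qed

lemma emeasure_PiM_Max_le:
  fixes M :: "'i \<Rightarrow> real measure" and t :: real
  assumes "product_sigma_finite M" and "finite I" and "I \<noteq> {}"
    and sets_M: "\<And>i. i \<in> I \<Longrightarrow> sets (M i) = sets borel"
  shows "emeasure (PiM I M) {x\<in>space (PiM I M). Max (x ` I) \<le> t} = (\<Prod>i\<in>I. emeasure (M i) {..t})"
proof -
  interpret product_sigma_finite M by fact
  have "{x\<in>space (PiM I M). Max (x ` I) \<le> t} = PiE I (\<lambda>_. {..t})"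
    using assms sets_eq_imp_space_eq[OF sets_M] by (auto simp: space_PiM PiE_def Pi_def)
  then show ?thesis
    using assms by (simp add: emeasure_PiM)
qed

lemma integral_Max_exponentials:
  fixes r :: "'i \<Rightarrow> real" and I :: "'i set"
  assumes fin: "finite I" and ne: "I \<noteq> {}" and r: "\<And>i. i \<in> I \<Longrightarrow> 0 < r i"
  shows "(\<integral>x. Max (x ` I) \<partial>PiM I (\<lambda>i. density lborel (exponential_density (r i))))
    = enn2real (\<integral>\<^sup>+t\<in>{0..}. ennreal (1 - (\<Prod>i\<in>I. 1 - exp (- (r i * t)))) \<partial>lborel)"
proof -
  \<comment> \<open>Rates outside \<open>I\<close> do not affect \<open>PiM I\<close>; making them positive gives a product of probability spaces.\<close>
  define Mi where "Mi i = density lborel (exponential_density (if i \<in> I then r i else 1))" for i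
  define M where "M = PiM I Mi"
  have M_eq: "PiM I (\<lambda>i. density lborel (exponential_density (r i))) = M"
    unfolding M_def Mi_def by (rule PiM_cong) auto
  have prob_Mi: "prob_space (Mi i)" for i
    unfolding Mi_def using r by (intro prob_space_exponential_density) auto
  interpret product_sigma_finite Mi
    by (intro product_sigma_finite.intro prob_space_imp_sigma_finite[OF prob_Mi])
  interpret prob_space M
    unfolding M_def by (rule prob_space_PiM[OF prob_Mi])
  have sets_Mi: "sets (Mi i) = sets borel" for i
    by (simp add: Mi_def)
  have [measurable]: "(\<lambda>x. x i) \<in> borel_measurable M" if "i \<in> I" for i
    using measurable_component_singleton[OF that, of Mi] unfolding M_def
    by (simp add: measurable_cong_sets[OF refl sets_Mi])
  have Max_measurable[measurable]: "(\<lambda>x. Max (x ` I)) \<in> borel_measurable M"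
    by (rule borel_measurable_Max[OF fin]) measurable
  have cdf: "emeasure M {x\<in>space M. Max (x ` I) \<le> t} = ennreal (\<Prod>i\<in>I. erlang_CDF 0 (r i) t)" for t
  proof -
    have "emeasure M {x\<in>space M. Max (x ` I) \<le> t} = (\<Prod>i\<in>I. emeasure (Mi i) {..t})"
      unfolding M_def by (rule emeasure_PiM_Max_le[OF product_sigma_finite_axioms fin ne sets_Mi])
    also have "\<dots> = (\<Prod>i\<in>I. ennreal (erlang_CDF 0 (r i) t))"
      using r by (intro prod.cong) (auto simp: Mi_def emeasure_erlang_density)
    finally show ?thesis
      using r by (simp add: prod_ennreal)
  qed
  have "AE x in M. 0 \<le> Max (x ` I)"
  proof (rule AE_I[of _ _ "{x\<in>space M. Max (x ` I) \<le> 0}"])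
    show "emeasure M {x\<in>space M. Max (x ` I) \<le> 0} = 0"
      using cdf[of 0] fin ne by (simp add: erlang_CDF_0 card_gt_0_iff)
  qed auto
  then have "(\<integral>x. Max (x ` I) \<partial>M) = enn2real (\<integral>\<^sup>+x. ennreal (Max (x ` I)) \<partial>M)"
    by (intro integral_eq_nn_integral) auto
  also have "(\<integral>\<^sup>+x. ennreal (Max (x ` I)) \<partial>M)
      = (\<integral>\<^sup>+t\<in>{0..}. emeasure M {x\<in>space M. t < Max (x ` I)} \<partial>lborel)"
    by (rule nn_integral_layer_cake) measurable
  also have "\<dots> = (\<integral>\<^sup>+t\<in>{0..}. ennreal (1 - (\<Prod>i\<in>I. 1 - exp (- (r i * t)))) \<partial>lborel)"
  proof (rule nn_integral_cong)
    fix t :: real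
    have "emeasure M {x\<in>space M. t < Max (x ` I)} = ennreal (1 - (\<Prod>i\<in>I. 1 - exp (- (r i * t))))"
      if "0 \<le> t"
    proof -
      have "{x\<in>space M. t < Max (x ` I)} = space M - {x\<in>space M. Max (x ` I) \<le> t}"
        by auto
      then have "emeasure M {x\<in>space M. t < Max (x ` I)} = 1 - ennreal (\<Prod>i\<in>I. erlang_CDF 0 (r i) t)"
        by (simp add: emeasure_compl emeasure_space_1 flip: cdf)
      moreover have "(\<Prod>i\<in>I. erlang_CDF 0 (r i) t) = (\<Prod>i\<in>I. 1 - exp (- (r i * t)))"
        using \<open>0 \<le> t\<close> by (intro prod.cong) (auto simp: erlang_CDF_0 mult.commute)
      moreover have "0 \<le> (\<Prod>i\<in>I. 1 - exp (- (r i * t)))"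
        using r \<open>0 \<le> t\<close> by (intro prod_nonneg) (simp add: less_imp_le)
      ultimately show ?thesis
        using ennreal_minus[of "\<Prod>i\<in>I. 1 - exp (- (r i * t))" 1] by simp
    qed
    then show "emeasure M {x\<in>space M. t < Max (x ` I)} * indicator {0..} t
        = ennreal (1 - (\<Prod>i\<in>I. 1 - exp (- (r i * t)))) * indicator {0..} t"
      by (simp split: split_indicator)
  qed
  finally show ?thesis
    by (simp add: M_eq)
qed

lemma nn_integral_one_minus_prod_one_minus_exp_finite:
  fixes r :: "'i \<Rightarrow> real"
  assumes "finite I" and r: "\<And>i. i \<in> I \<Longrightarrow> 0 < r i"
  shows "(\<integral>\<^sup>+t\<in>{0..}. ennreal (1 - (\<Prod>i\<in>I. 1 - exp (- (r i * t)))) \<partial>lborel) < \<infinity>"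
proof -
  have "(\<integral>\<^sup>+t\<in>{0..}. ennreal (1 - (\<Prod>i\<in>I. 1 - exp (- (r i * t)))) \<partial>lborel)
      \<le> (\<integral>\<^sup>+t. (\<Sum>i\<in>I. ennreal (exp (- (r i * t))) * indicator {0..} t) \<partial>lborel)"
  proof (rule nn_integral_mono)
    fix t :: real
    have "ennreal (1 - (\<Prod>i\<in>I. 1 - exp (- (r i * t)))) \<le> (\<Sum>i\<in>I. ennreal (exp (- (r i * t))))"
      if "0 \<le> t"
    proof -
      have "1 - (\<Prod>i\<in>I. 1 - exp (- (r i * t))) \<le> (\<Sum>i\<in>I. exp (- (r i * t)))"
        using Weierstrass_prod_ineq[of I "\<lambda>i. exp (- (r i * t))"] r that
        by (simp add: less_imp_le)
      then show ?thesis
        by (simp add: ennreal_leI sum_ennreal)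
    qed
    then show "ennreal (1 - (\<Prod>i\<in>I. 1 - exp (- (r i * t)))) * indicator {0..} t
        \<le> (\<Sum>i\<in>I. ennreal (exp (- (r i * t))) * indicator {0..} t)"
      by (simp split: split_indicator)
  qed
  also have "\<dots> = (\<Sum>i\<in>I. ennreal (1 / r i))"
    using r by (simp add: nn_integral_sum nn_integral_exp_Ici)
  also have "\<dots> < \<infinity>"
    using \<open>finite I\<close> by (simp add: sum_ennreal)
  finally show ?thesis .
qed

lemma expected_T_eq_nn_integral:
  assumes "0 < B" and "0 < lam" and "Nv \<in> assignments N B"
  shows "expected_T lam B Nv
    = enn2real (\<integral>\<^sup>+t\<in>{0..}. ennreal (1 - (\<Prod>i<B. 1 - exp (- (real (Nv i) * lam * t)))) \<partial>lborel)"
  unfolding expected_T_def service_law_def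
  using assms by (intro integral_Max_exponentials) (auto simp: assignments_def)

lemma expected_T_ge_harm:
  assumes "0 < B" and "0 < lam" and Nv: "Nv \<in> assignments N B"
  shows "real B / (real N * lam) * harm B \<le> expected_T lam B Nv"
proof -
  have pos: "\<And>i. i < B \<Longrightarrow> 0 < Nv i" and sum_Nv: "(\<Sum>i<B. Nv i) = N"
    using Nv by (auto simp: assignments_def)
  have "0 < N"
    using pos[OF \<open>0 < B\<close>] sum_Nv member_le_sum[of 0 "{..<B}" Nv] \<open>0 < B\<close> by simp
  define c where "c = real N * lam / real B"
  have "0 < c"
    using \<open>0 < N\<close> assms by (simp add: c_def)
  have prod_le: "(\<Prod>i<B. 1 - exp (- (real (Nv i) * lam * t))) \<le> (1 - exp (- (c * t))) ^ B"
    if "0 \<le> t" for t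
  proof -
    have "(\<Sum>i<B. real (Nv i) * lam * t) / real (card {..<B}) = c * t"
      by (simp add: c_def sum_distrib_right[symmetric] flip: of_nat_sum sum_Nv)
    then show ?thesis
      using prod_one_minus_exp_le_pow_mean[of "{..<B}" "\<lambda>i. real (Nv i) * lam * t"] \<open>0 < lam\<close> that
      by simp
  qed
  have "ennreal (harm B / c)
      \<le> (\<integral>\<^sup>+t\<in>{0..}. ennreal (1 - (\<Prod>i<B. 1 - exp (- (real (Nv i) * lam * t)))) \<partial>lborel)"
    unfolding nn_integral_one_minus_pow_one_minus_exp[OF \<open>0 < c\<close>, symmetric]
    using prod_le by (intro nn_integral_mono) (simp add: ennreal_leI split: split_indicator)
  then have "enn2real (ennreal (harm B / c)) \<le> expected_T lam B Nv"
    unfolding expected_T_eq_nn_integral[OF assms]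
    using nn_integral_one_minus_prod_one_minus_exp_finite[of "{..<B}" "\<lambda>i. real (Nv i) * lam"] pos \<open>0 < lam\<close>
    by (intro enn2real_mono) (auto simp: mult.assoc)
  moreover have "0 \<le> harm B / c"
    using \<open>0 < c\<close> by (simp add: harm_nonneg)
  moreover have "harm B / c = real B / (real N * lam) * harm B"
    by (simp add: c_def)
  ultimately show ?thesis
    by simp
qed

lemma balanced_assignment:
  assumes "0 < N" and "B dvd N"
  shows "(\<lambda>i. if i < B then N div B else 0) \<in> assignments N B"
  using assms by (auto simp: assignments_def elim!: dvdE)

lemma expected_T_balanced:
  assumes "0 < N" and "0 < B" and "B dvd N" and "0 < lam"
  shows "expected_T lam B (\<lambda>i. if i < B then N div B else 0) = real B / (real N * lam) * harm B"
proof -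
  define c where "c = real N * lam / real B"
  have "0 < c"
    using assms by (simp add: c_def)
  have "(\<Prod>i<B. 1 - exp (- (real (if i < B then N div B else 0) * lam * t))) = (1 - exp (- (c * t))) ^ B"
    for t
    using \<open>B dvd N\<close> by (simp add: c_def real_of_nat_div)
  then have "expected_T lam B (\<lambda>i. if i < B then N div B else 0) = harm B / c"
    using assms balanced_assignment[OF \<open>0 < N\<close> \<open>B dvd N\<close>] \<open>0 < c\<close>
    by (simp add: expected_T_eq_nn_integral nn_integral_one_minus_pow_one_minus_exp harm_nonneg)
  then show ?thesis
    by (simp add: c_def)
qed

theorem proposition3:
  fixes N B :: nat and lam :: real
  assumes "0 < N" and "0 < B" and "B dvd N" and "0 < lam"
  shows "(INF Nv\<in>assignments N B. expected_T lam B Nv) = real B / (real N * lam) * harm B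
    \<and> (\<lambda>i. if i < B then N div B else 0) \<in> assignments N B
    \<and> expected_T lam B (\<lambda>i. if i < B then N div B else 0) = real B / (real N * lam) * harm B"
proof -
  let ?balanced = "\<lambda>i. if i < B then N div B else 0"
  have balanced: "?balanced \<in> assignments N B"
    using assms by (intro balanced_assignment)
  have optimum: "expected_T lam B ?balanced = real B / (real N * lam) * harm B"
    using assms by (intro expected_T_balanced)
  have "(INF Nv\<in>assignments N B. expected_T lam B Nv) = real B / (real N * lam) * harm B"
  proof (rule cInf_eq_minimum)
    show "real B / (real N * lam) * harm B \<in> expected_T lam B ` assignments N B"
      using optimum balanced by (rule image_eqI[where f = "expected_T lam B", OF sym])
  next
    fix x assume "x \<in> expected_T lam B ` assignments N B"
    then show "real B / (real N * lam) * harm B \<le> x"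
      using expected_T_ge_harm[OF \<open>0 < B\<close> \<open>0 < lam\<close>] by blast
  qed
  with balanced optimum show ?thesis
    by blast
qed

end
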